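(* Let $G=([k],E)$ be realisable in $\mathbb{R}^d$ with profile $\boldsymbol\lambda$, where $\lambda_i\ge 2$ for every $i\in[k]$. If the girth of $G$ is $2\ell+1$ with $\ell>1$, then $\zeta(G,\boldsymbol\lambda)\le\frac d2$. If the girth of $G$ is $2\ell$ with $\ell>2$, then $\zeta(G,\boldsymbol\lambda)\le\frac{\ell}{2\ell-1}d$.
   Context: The girth of a graph is the length of its shortest cycle. A sphere of dimension $\ell$ in $\mathbb{R}^d$ ($0\le\ell\le d-1$) is the set of points of an $(\ell+1)$-dimensional affine subspace at a fixed positive distance from a fixed point of that subspace. For finite sets $P_1,\dots,P_k\subset\mathbb{R}^d$, the profile of $(P_1,\dots,P_k)$ is $\boldsymbol\lambda=(\lambda_1,\dots,\lambda_k)$, where $\lambda_i=0$ if $|P_i|\le 3$, and otherwise $\lambda_i$ is the smallest $\ell$ such that some sphere of dimension $\ell$ contains $P_i$, with $\lambda_i=d$ if no sphere contains $P_i$. A graph $G=([k],E)$ is compatible with $(P_1,\dots,P_k)$ if $\|p-p'\|=1$ for every edge $\{i,j\}\in E$ and all $p\in P_i$, $p'\in P_j$. $G$ is realisable in $\mathbb{R}^d$ with profile $\boldsymbol\lambda$ if there exist finite sets $P_1,\dots,P_k\subset\mathbb{R}^d$ with profile $\boldsymbol\lambda$ that are compatible with $G$. For $i\in[k]$ let $V_i=\{j\in[k]\setminus\{i\}:\{i,j\}\notin E\}$. $\zeta(G,\boldsymbol\lambda)$ denotes the optimum value of the linear program: minimize $\sum_{i\in[k]}\lambda_ix_i$ over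 $\mathbf{x}\in\mathbb{R}^k$ subject to $x_i\ge 0$ and $\lambda_ix_i+\sum_{j\in V_i}x_j\ge 1$ for all $i\in[k]$. *)

theory Defs
  imports "HOL-Analysis.Analysis"
begin

definition simple_graph :: "nat \<Rightarrow> nat set set \<Rightarrow> bool" where
  "simple_graph k E \<longleftrightarrow>
     E \<subseteq> {{i, j} | i j. i \<in> {1..k} \<and> j \<in> {1..k} \<and> i \<noteq> j}"

definition is_cycle :: "nat \<Rightarrow> nat set set \<Rightarrow> nat list \<Rightarrow> bool" where
  "is_cycle k E vs \<longleftrightarrow> length vs \<ge> 3 \<and> distinct vs \<and> set vs \<subseteq> {1..k} \<and>
     (\<forall>i < length vs. {vs ! i, vs ! ((i + 1) mod length vs)} \<in> E)"

definition has_girth :: "nat \<Rightarrow> nat set set \<Rightarrow> nat \<Rightarrow> bool" where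
  "has_girth k E g \<longleftrightarrow> (\<exists>vs. is_cycle k E vs \<and> length vs = g) \<and>
     (\<forall>vs. is_cycle k E vs \<longrightarrow> g \<le> length vs)"

definition is_sphere :: "'a::euclidean_space set \<Rightarrow> nat \<Rightarrow> bool" where
  "is_sphere S l \<longleftrightarrow> (\<exists>A c r. affine A \<and> aff_dim A = int l + 1 \<and> c \<in> A \<and> r > 0 \<and>
     S = {x \<in> A. dist x c = r})"

definition profile_val :: "'a::euclidean_space set \<Rightarrow> nat" where
  "profile_val P =
    (if card P \<le> 3 then 0
     else if (\<exists>l S. is_sphere S l \<and> P \<subseteq> S) then (LEAST l. \<exists>S. is_sphere S l \<and> P \<subseteq> S)
     else DIM('a))"

definition compatible :: "nat set set \<Rightarrow> (nat \<Rightarrow> 'a::euclidean_space set) \<Rightarrow> bool" where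
  "compatible E P \<longleftrightarrow> (\<forall>i j. {i, j} \<in> E \<longrightarrow> (\<forall>p \<in> P i. \<forall>p' \<in> P j. dist p p' = 1))"

definition realisable_with_profile ::
  "'a::euclidean_space itself \<Rightarrow> nat \<Rightarrow> nat set set \<Rightarrow> (nat \<Rightarrow> nat) \<Rightarrow> bool" where
  "realisable_with_profile _ k E lam \<longleftrightarrow>
     (\<exists>P :: nat \<Rightarrow> 'a set. (\<forall>i \<in> {1..k}. finite (P i) \<and> profile_val (P i) = lam i) \<and>
        compatible E P)"

definition nonnbrs :: "nat \<Rightarrow> nat set set \<Rightarrow> nat \<Rightarrow> nat set" where
  "nonnbrs k E i = {j \<in> {1..k}. j \<noteq> i \<and> {i, j} \<notin> E}"

definition zeta :: "nat \<Rightarrow> nat set set \<Rightarrow> (nat \<Rightarrow> nat) \<Rightarrow> real" where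
  "zeta k E lam = Inf {(\<Sum>i\<in>{1..k}. real (lam i) * x i) | x :: nat \<Rightarrow> real.
      \<forall>i \<in> {1..k}. x i \<ge> 0 \<and> real (lam i) * x i + (\<Sum>j \<in> nonnbrs k E i. x j) \<ge> 1}"

end

theory Submission
  imports Defs
begin

text \<open>Take a shortest cycle \<open>C\<close>, of length \<open>g \<ge> 5\<close>. Putting weight \<open>1 / (g - 1)\<close> on the
  vertices of \<open>C\<close> is feasible for the LP, because no vertex has more than its two cycle
  neighbours on \<open>C\<close> and no outside vertex has two neighbours on \<open>C\<close>; so \<open>\<zeta>\<close> is at most
  the sum of \<open>\<lambda>\<^sub>i\<close> over \<open>C\<close> divided by \<open>g - 1\<close>.
  If \<open>p\<^sub>i \<in> P\<^sub>i\<close>, unit distances between adjacent sets make the difference sets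
  \<open>P\<^sub>i - p\<^sub>i\<close> and \<open>P\<^sub>j - p\<^sub>j\<close> orthogonal, and \<open>\<lambda>\<^sub>i \<le> dim (P\<^sub>i - p\<^sub>i)\<close> since \<open>P\<^sub>i\<close> lies on a
  unit sphere around any point of a neighbouring set. Subspaces around a cycle of length \<open>g\<close>
  with consecutive ones orthogonal have total dimension at most \<open>\<lfloor>g/2\<rfloor> d\<close>, which gives
  \<open>l d / (2 l)\<close> for \<open>g = 2 l + 1\<close> and \<open>l d / (2 l - 1)\<close> for \<open>g = 2 l\<close>.\<close>

definition orthogonal_sets :: "'a::real_inner set \<Rightarrow> 'a set \<Rightarrow> bool" where
  "orthogonal_sets A B \<longleftrightarrow> (\<forall>x\<in>A. \<forall>y\<in>B. orthogonal x y)"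

lemma orthogonal_sets_mono:
  "orthogonal_sets A B \<Longrightarrow> A' \<subseteq> A \<Longrightarrow> B' \<subseteq> B \<Longrightarrow> orthogonal_sets A' B'"
  unfolding orthogonal_sets_def by blast

lemma orthogonal_sets_span:
  assumes "orthogonal_sets A B"
  shows "orthogonal_sets (span A) (span B)"
  unfolding orthogonal_sets_def
proof (intro ballI)
  fix x y assume x: "x \<in> span A" and y: "y \<in> span B"
  have "orthogonal a y" if "a \<in> A" for a
    using orthogonal_to_span[OF y] assms that unfolding orthogonal_sets_def by blast
  then show "orthogonal x y"
    using orthogonal_to_span[OF x] orthogonal_commute by blast
qed

lemma dim_add_le_DIM_if_orthogonal_sets:
  fixes A B :: "'a::euclidean_space set"
  assumes "orthogonal_sets A B"
  shows "dim A + dim B \<le> DIM('a)"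
  using dim_orthogonal_sum[of A B] dim_subset_UNIV[of "A \<union> B"] assms
  unfolding orthogonal_sets_def orthogonal_def by auto

lemma dim_add3_le_DIM_if_orthogonal_sets:
  fixes A B C :: "'a::euclidean_space set"
  assumes "subspace B" "subspace C" "orthogonal_sets A B" "orthogonal_sets A C"
  shows "dim A + dim B + dim C \<le> DIM('a) + dim (B \<inter> C)"
proof -
  let ?S = "{x + y |x y. x \<in> B \<and> y \<in> C}"
  have "orthogonal_sets A ?S"
    using assms(3,4) unfolding orthogonal_sets_def orthogonal_def by (auto simp: inner_add_right)
  then have "dim A + dim ?S \<le> DIM('a)"
    by (rule dim_add_le_DIM_if_orthogonal_sets)
  then show ?thesis
    using dim_sums_Int[OF assms(1,2)] by linarith
qed

lemma sum_dim_le_if_orthogonal_path: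
  fixes U :: "nat \<Rightarrow> 'a::euclidean_space set"
  assumes "\<And>i. Suc i < 2 * m \<Longrightarrow> orthogonal_sets (U i) (U (Suc i))"
  shows "(\<Sum>i<2 * m. dim (U i)) \<le> m * DIM('a)"
  using assms
proof (induction m)
  case (Suc m)
  have "dim (U (2 * m)) + dim (U (Suc (2 * m))) \<le> DIM('a)"
    by (rule dim_add_le_DIM_if_orthogonal_sets) (simp add: Suc.prems)
  with Suc show ?case by simp
qed simp

text \<open>The induction step merges \<open>U 0\<close> and \<open>U (2 * m + 1)\<close> into their intersection;
  \<open>U (2 * m + 2)\<close> is orthogonal to both, so the three-term bound pays for the two removed
  terms with one copy of the ambient dimension.\<close>

lemma sum_dim_le_if_orthogonal_odd_cycle:
  fixes U :: "nat \<Rightarrow> 'a::euclidean_space set"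
  assumes "\<And>i. subspace (U i)"
    and "\<And>i. i < 2 * m \<Longrightarrow> orthogonal_sets (U i) (U (Suc i))"
    and "orthogonal_sets (U (2 * m)) (U 0)"
  shows "(\<Sum>i<2 * m + 1. dim (U i)) \<le> m * DIM('a)"
  using assms
proof (induction m arbitrary: U)
  case 0
  then have "orthogonal_sets (U 0) (U 0)"
    by simp
  then have "U 0 \<subseteq> {0}"
    unfolding orthogonal_sets_def using orthogonal_self by blast
  then show ?case by simp
next
  case (Suc m)
  define K where "K = U 0 \<inter> U (2 * m + 1)"
  define V where "V = U(0 := K)"
  have "(\<Sum>i<2 * m + 1. dim (V i)) \<le> m * DIM('a)"
  proof (rule Suc.IH)
    show "subspace (V i)" for i
      using Suc.prems(1) by (simp add: V_def K_def subspace_inter)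
    have VU: "V i \<subseteq> U i" for i
      by (simp add: V_def K_def)
    show "orthogonal_sets (V i) (V (Suc i))" if "i < 2 * m" for i
      using Suc.prems(2)[of i] that VU by (simp add: V_def orthogonal_sets_mono)
    show "orthogonal_sets (V (2 * m)) (V 0)"
      using Suc.prems(2)[of "2 * m"] VU[of "2 * m"]
      by (auto simp: V_def K_def elim: orthogonal_sets_mono)
  qed
  moreover have "(\<Sum>i<2 * m + 1. dim (V i)) + dim (U 0) = (\<Sum>i<2 * m + 1. dim (U i)) + dim K"
    by (simp add: V_def sum.lessThan_Suc_shift del: sum.lessThan_Suc)
  moreover have "dim (U (2 * m + 2)) + dim (U 0) + dim (U (2 * m + 1)) \<le> DIM('a) + dim K"
    unfolding K_def
  proof (rule dim_add3_le_DIM_if_orthogonal_sets)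
    show "orthogonal_sets (U (2 * m + 2)) (U 0)"
      using Suc.prems(3) by simp
    show "orthogonal_sets (U (2 * m + 2)) (U (2 * m + 1))"
    proof -
      have "orthogonal_sets (U (2 * m + 1)) (U (2 * m + 2))"
        using Suc.prems(2)[of "2 * m + 1"] by simp
      then show ?thesis
        unfolding orthogonal_sets_def by (meson orthogonal_commute)
    qed
  qed (use Suc.prems(1) in auto)
  ultimately show ?case by simp
qed

lemma sum_dim_le_if_orthogonal_cycle:
  fixes U :: "nat \<Rightarrow> 'a::euclidean_space set"
  assumes "\<And>i. subspace (U i)"
    and "\<And>i. i < g \<Longrightarrow> orthogonal_sets (U i) (U (Suc i mod g))"
  shows "(\<Sum>i<g. dim (U i)) \<le> g div 2 * DIM('a)"
proof (cases "even g")
  case True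
  then obtain m where g: "g = 2 * m" by blast
  have "(\<Sum>i<2 * m. dim (U i)) \<le> m * DIM('a)"
  proof (rule sum_dim_le_if_orthogonal_path)
    show "orthogonal_sets (U i) (U (Suc i))" if "Suc i < 2 * m" for i
      using assms(2)[of i] that g by simp
  qed
  then show ?thesis using g by simp
next
  case False
  then obtain m where g: "g = 2 * m + 1" using oddE by blast
  have "(\<Sum>i<2 * m + 1. dim (U i)) \<le> m * DIM('a)"
  proof (rule sum_dim_le_if_orthogonal_odd_cycle)
    show "orthogonal_sets (U i) (U (Suc i))" if "i < 2 * m" for i
      using assms(2)[of i] that g by simp
    show "orthogonal_sets (U (2 * m)) (U 0)"
      using assms(2)[of "2 * m"] g by simp
  qed (rule assms(1))
  then show ?thesis using g by simp
qed

lemma orthogonal_sets_diff_if_unit_distances: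
  fixes P Q :: "'a::real_inner set"
  assumes unit: "\<And>p q. p \<in> P \<Longrightarrow> q \<in> Q \<Longrightarrow> dist p q = 1" and "p0 \<in> P" "q0 \<in> Q"
  shows "orthogonal_sets ((\<lambda>p. p - p0) ` P) ((\<lambda>q. q - q0) ` Q)"
proof -
  have sq: "(x - y) \<bullet> (x - y) = 1" if "dist x y = 1" for x y :: 'a
    using that by (metis dist_norm power2_norm_eq_inner power_one)
  have "orthogonal (p - p0) (q - q0)" if "p \<in> P" "q \<in> Q" for p q
  proof -
    \<comment> \<open>polarisation: the four squared unit distances cancel\<close>
    have "2 * ((p - p0) \<bullet> (q - q0)) =
        (p - q0) \<bullet> (p - q0) + (p0 - q) \<bullet> (p0 - q) - (p - q) \<bullet> (p - q) - (p0 - q0) \<bullet> (p0 - q0)"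
      by (simp add: inner_commute algebra_simps)
    then show ?thesis
      unfolding orthogonal_def using sq unit that assms(2,3) by simp
  qed
  then show ?thesis
    unfolding orthogonal_sets_def by blast
qed

text \<open>The witnessing sphere has centre \<open>c\<close> and radius \<open>r\<close> inside the affine hull of
  \<open>insert c P\<close>, whose dimension is at most one more than that of \<open>P\<close>.\<close>

lemma profile_val_le_aff_dim:
  fixes P :: "'a::euclidean_space set"
  assumes "P \<subseteq> sphere c r" "r > 0" "P \<noteq> {}"
  shows "int (profile_val P) \<le> aff_dim P"
proof (cases "card P \<le> 3")
  case True
  then have "profile_val P = 0"
    by (simp add: profile_val_def)
  moreover have "\<not> aff_dim P < 0"
    using assms(3) by simp
  ultimately show ?thesis
    by linarith
next
  case False
  define A where "A = affine hull (insert c P)"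
  have "c \<notin> P"
    using assms(1,2) by auto
  then obtain p where "p \<in> P" "p \<noteq> c"
    using assms(3) by blast
  then have "1 \<le> aff_dim (insert c P)"
    using aff_dim_subset[of "{c, p}" "insert c P"] by auto
  define l where "l = nat (aff_dim A - 1)"
  with \<open>1 \<le> aff_dim (insert c P)\<close> have l: "aff_dim A = int l + 1"
    by (simp add: A_def)
  let ?S = "{x \<in> A. dist x c = r}"
  have "is_sphere ?S l"
    using l assms(2) affine_affine_hull hull_inc[of c "insert c P"]
    unfolding is_sphere_def A_def by blast
  moreover have "P \<subseteq> ?S"
  proof -
    have "P \<subseteq> A"
      unfolding A_def by (meson hull_subset subset_insertI subset_trans)
    then show ?thesis
      using assms(1) by (auto simp: dist_commute)
  qed
  ultimately have "(LEAST l. \<exists>S. is_sphere S l \<and> P \<subseteq> S) \<le> l"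
    by (blast intro: Least_le)
  moreover have "\<exists>l S. is_sphere S l \<and> P \<subseteq> S"
    using \<open>is_sphere ?S l\<close> \<open>P \<subseteq> ?S\<close> by blast
  ultimately have "profile_val P \<le> l"
    using False by (simp add: profile_val_def)
  moreover have "aff_dim A \<le> aff_dim P + 1"
    using aff_dim_insert[of c P] by (simp add: A_def)
  ultimately show ?thesis
    using l by linarith
qed

lemma sum_profile_val_le_if_unit_distance_cycle:
  fixes P :: "nat \<Rightarrow> 'a::euclidean_space set"
  assumes nonempty: "\<And>j. j < g \<Longrightarrow> P j \<noteq> {}"
    and unit: "\<And>j p q. j < g \<Longrightarrow> p \<in> P j \<Longrightarrow> q \<in> P (Suc j mod g) \<Longrightarrow> dist p q = 1"
  shows "(\<Sum>j<g. profile_val (P j)) \<le> g div 2 * DIM('a)"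
proof -
  define p0 where "p0 j = (SOME p. p \<in> P j)" for j
  have p0: "p0 j \<in> P j" if "j < g" for j
    unfolding p0_def using nonempty[OF that] by (simp add: some_in_eq)
  have next_lt: "Suc j mod g < g" if "j < g" for j
    using that by simp
  define W where "W j = span ((\<lambda>p. p - p0 j) ` P j)" for j
  have profile_le_dim: "profile_val (P j) \<le> dim (W j)" if j: "j < g" for j
  proof -
    have "P j \<subseteq> sphere (p0 (Suc j mod g)) 1"
      using unit[OF j _ p0[OF next_lt[OF j]]] by (metis dist_commute mem_sphere subsetI)
    then have "int (profile_val (P j)) \<le> aff_dim (P j)"
      using profile_val_le_aff_dim[OF _ zero_less_one] p0[OF j] by blast
    also have "\<dots> = int (dim (W j))"
      unfolding W_def dim_span by (rule aff_dim_eq_dim_subtract) (rule hull_inc[OF p0[OF j]])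
    finally show ?thesis by simp
  qed
  have "(\<Sum>j<g. profile_val (P j)) \<le> (\<Sum>j<g. dim (W j))"
    by (rule sum_mono) (simp add: profile_le_dim)
  also have "\<dots> \<le> g div 2 * DIM('a)"
  proof (rule sum_dim_le_if_orthogonal_cycle)
    show "subspace (W j)" for j
      by (simp add: W_def)
    show "orthogonal_sets (W j) (W (Suc j mod g))" if "j < g" for j
      unfolding W_def
      using orthogonal_sets_diff_if_unit_distances[OF unit[OF that] p0[OF that] p0[OF next_lt[OF that]]]
      by (rule orthogonal_sets_span)
  qed
  finally show ?thesis .
qed

lemma is_cycleI:
  assumes "3 \<le> length xs" "distinct xs" "set xs \<subseteq> {1..k}"
    and "\<And>i. Suc i < length xs \<Longrightarrow> {xs ! i, xs ! Suc i} \<in> E"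
    and "{xs ! (length xs - 1), xs ! 0} \<in> E"
  shows "is_cycle k E xs"
  unfolding is_cycle_def
proof (intro conjI allI impI)
  fix i assume i: "i < length xs"
  show "{xs ! i, xs ! ((i + 1) mod length xs)} \<in> E"
  proof (cases "Suc i < length xs")
    case True
    then show ?thesis using assms(4) by simp
  next
    case False
    with i have "Suc i = length xs" by simp
    then show ?thesis using assms(5) by (metis diff_Suc_1 mod_self Suc_eq_plus1)
  qed
qed (use assms in auto)

lemma is_cycle_edge:
  assumes "is_cycle k E vs"
  shows "{vs ! (t mod length vs), vs ! (Suc t mod length vs)} \<in> E"
proof -
  have "t mod length vs < length vs"
    using assms unfolding is_cycle_def by (intro mod_less_divisor) linarith
  then show ?thesis
    using assms unfolding is_cycle_def by (metis Suc_eq_plus1 mod_Suc_eq)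
qed

definition cycle_arc :: "nat list \<Rightarrow> nat \<Rightarrow> nat \<Rightarrow> nat list" where
  "cycle_arc vs a b = map (\<lambda>t. vs ! (t mod length vs)) [a..<b]"

lemma distinct_cycle_arc:
  assumes "distinct vs" "b \<le> a + length vs"
  shows "distinct (cycle_arc vs a b)"
  unfolding cycle_arc_def distinct_map
proof
  have window: "s = t"
    if eq: "s mod n = t mod n" and le: "s \<le> t" and "a \<le> s" "t < a + n" for s t n :: nat
  proof -
    obtain q where "t = s + n * q"
      using mod_eq_nat2E[OF eq le] .
    with \<open>a \<le> s\<close> \<open>t < a + n\<close> show ?thesis
      by (cases q) auto
  qed
  show "inj_on (\<lambda>t. vs ! (t mod length vs)) (set [a..<b])"
  proof (rule inj_onI)
    fix s t assume s: "s \<in> set [a..<b]" and t: "t \<in> set [a..<b]"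
      and "vs ! (s mod length vs) = vs ! (t mod length vs)"
    moreover have "vs \<noteq> []"
      using s assms(2) by auto
    ultimately have "s mod length vs = t mod length vs"
      using nth_eq_iff_index_eq[OF assms(1), of "s mod length vs" "t mod length vs"] by simp
    moreover have "a \<le> s" "a \<le> t" "s < a + length vs" "t < a + length vs"
      using s t assms(2) by auto
    ultimately show "s = t"
      using window[of s "length vs" t] window[of t "length vs" s] by (cases "s \<le> t") auto
  qed
qed simp

lemma cycle_arc_edge:
  assumes "is_cycle k E vs" "Suc i < b - a"
  shows "{cycle_arc vs a b ! i, cycle_arc vs a b ! Suc i} \<in> E"
  using assms is_cycle_edge[OF assms(1), of "a + i"] by (simp add: cycle_arc_def)

lemma is_cycle_cycle_arc:
  assumes C: "is_cycle k E vs" and "a + 3 \<le> b" "b \<le> a + length vs"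
    and closing: "{vs ! ((b - 1) mod length vs), vs ! (a mod length vs)} \<in> E"
  shows "is_cycle k E (cycle_arc vs a b)"
proof (rule is_cycleI)
  have "vs \<noteq> []"
    using C by (auto simp: is_cycle_def)
  then show "set (cycle_arc vs a b) \<subseteq> {1..k}"
    using C unfolding is_cycle_def cycle_arc_def by auto
  show "distinct (cycle_arc vs a b)"
    using C assms(3) by (simp add: is_cycle_def distinct_cycle_arc)
  show "{cycle_arc vs a b ! i, cycle_arc vs a b ! Suc i} \<in> E"
    if "Suc i < length (cycle_arc vs a b)" for i
    using cycle_arc_edge[OF C] that by (simp add: cycle_arc_def)
  have "a + (b - a - 1) = b - 1"
    using assms(2) by simp
  then show "{cycle_arc vs a b ! (length (cycle_arc vs a b) - 1), cycle_arc vs a b ! 0} \<in> E"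
    using closing assms(2) by (simp add: cycle_arc_def)
qed (use assms in \<open>simp add: cycle_arc_def\<close>)

lemma is_cycle_Cons_cycle_arc:
  assumes C: "is_cycle k E vs" and "a + 2 \<le> b" "b \<le> a + length vs"
    and w: "w \<in> {1..k}" "w \<notin> set vs"
    and first: "{w, vs ! (a mod length vs)} \<in> E"
    and last: "{vs ! ((b - 1) mod length vs), w} \<in> E"
  shows "is_cycle k E (w # cycle_arc vs a b)"
proof (rule is_cycleI)
  have "vs \<noteq> []"
    using C by (auto simp: is_cycle_def)
  then have arc: "set (cycle_arc vs a b) \<subseteq> set vs"
    by (auto simp: cycle_arc_def)
  then show "set (w # cycle_arc vs a b) \<subseteq> {1..k}"
    using C w unfolding is_cycle_def by auto
  show "distinct (w # cycle_arc vs a b)"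
    using C assms(3) w(2) arc by (auto simp: is_cycle_def distinct_cycle_arc)
  show "{(w # cycle_arc vs a b) ! i, (w # cycle_arc vs a b) ! Suc i} \<in> E"
    if "Suc i < length (w # cycle_arc vs a b)" for i
  proof (cases i)
    case 0
    then show ?thesis using first that by (simp add: cycle_arc_def)
  next
    case (Suc j)
    then show ?thesis using cycle_arc_edge[OF C, of j b a] that by (simp add: cycle_arc_def)
  qed
  have "a + (b - a - 1) = b - 1"
    using assms(2) by simp
  then show "{(w # cycle_arc vs a b) ! (length (w # cycle_arc vs a b) - 1), (w # cycle_arc vs a b) ! 0} \<in> E"
    using last assms(2) by (simp add: cycle_arc_def)
qed (use assms in \<open>simp add: cycle_arc_def\<close>)

lemma has_girth_le_length: "has_girth k E g \<Longrightarrow> is_cycle k E vs \<Longrightarrow> g \<le> length vs"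
  unfolding has_girth_def by blast

lemma shortest_cycle_chord:
  assumes girth: "has_girth k E g" and C: "is_cycle k E vs" "length vs = g"
    and "j < g" "j' < g" "j \<noteq> j'" and chord: "{vs ! j, vs ! j'} \<in> E"
  shows "j' = Suc j mod g \<or> j = Suc j' mod g"
proof -
  have adjacent: "j' = Suc j \<or> (j = 0 \<and> j' = g - 1)"
    if "j < j'" "j' < g" "{vs ! j, vs ! j'} \<in> E" for j j'
  proof (rule ccontr)
    assume "\<not> ?thesis"
    with that(1,2) have short: "j + 3 \<le> Suc j'" "Suc j' - j < g"
      by auto
    have "is_cycle k E (cycle_arc vs j (Suc j'))"
      using short that C by (intro is_cycle_cycle_arc) (auto simp: insert_commute)
    then have "g \<le> length (cycle_arc vs j (Suc j'))"
      by (rule has_girth_le_length[OF girth])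
    then show False
      using short by (simp add: cycle_arc_def del: upt_Suc)
  qed
  show ?thesis
  proof (cases "j < j'")
    case True
    then show ?thesis
      using adjacent[OF True \<open>j' < g\<close> chord] \<open>j' < g\<close> by auto
  next
    case False
    then have "j' < j"
      using \<open>j \<noteq> j'\<close> by simp
    then show ?thesis
      using adjacent[OF _ \<open>j < g\<close>, of j'] chord \<open>j < g\<close> by (auto simp: insert_commute)
  qed
qed

text \<open>Two neighbours of an outside vertex split the cycle into two arcs; closing the
  shorter one through the vertex gives a cycle of length at most \<open>g div 2 + 2 < g\<close>.\<close>

lemma shortest_cycle_outside_neighbour_unique:
  assumes girth: "has_girth k E g" and C: "is_cycle k E vs" "length vs = g" and "5 \<le> g"
    and w: "w \<in> {1..k}" "w \<notin> set vs"
    and "j < g" "j' < g" "{w, vs ! j} \<in> E" "{w, vs ! j'} \<in> E"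
  shows "j = j'"
proof -
  have False if "j < j'" "j' < g" "{w, vs ! j} \<in> E" "{w, vs ! j'} \<in> E" for j j'
  proof (cases "j' \<le> j + 2")
    case True
    have "is_cycle k E (w # cycle_arc vs j (Suc j'))"
      using that C w by (intro is_cycle_Cons_cycle_arc) (auto simp: insert_commute)
    then have "g \<le> length (w # cycle_arc vs j (Suc j'))"
      by (rule has_girth_le_length[OF girth])
    then show False
      using True \<open>5 \<le> g\<close> by (simp add: cycle_arc_def del: upt_Suc)
  next
    case False
    have "(g + j) mod g = j"
      using that by simp
    then have "is_cycle k E (w # cycle_arc vs j' (Suc (g + j)))"
      using that C w by (intro is_cycle_Cons_cycle_arc) (auto simp: insert_commute)
    then have "g \<le> length (w # cycle_arc vs j' (Suc (g + j)))"
      by (rule has_girth_le_length[OF girth])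
    then show False
      using False that by (simp add: cycle_arc_def del: upt_Suc)
  qed
  then show ?thesis
    using assms(7-) by (cases j j' rule: linorder_cases) auto
qed

lemma card_closed_neighbourhood_on_shortest_cycle:
  assumes girth: "has_girth k E g" and C: "is_cycle k E vs" "length vs = g" and "j < g"
  shows "card {v \<in> set vs. v = vs ! j \<or> {vs ! j, v} \<in> E} \<le> 3"
proof -
  have "g > 0"
    using \<open>j < g\<close> by simp
  have "{v \<in> set vs. v = vs ! j \<or> {vs ! j, v} \<in> E}
      \<subseteq> {vs ! j, vs ! (Suc j mod g), vs ! ((j + g - 1) mod g)}"
  proof safe
    fix v assume "v \<in> set vs" "{vs ! j, v} \<in> E" "v \<noteq> vs ! j" "v \<noteq> vs ! (Suc j mod g)"
    then obtain j' where j': "j' < g" "v = vs ! j'" "j' \<noteq> j"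
      using C(2) by (metis in_set_conv_nth)
    then have "j' = Suc j mod g \<or> j = Suc j' mod g"
      using shortest_cycle_chord[OF girth C \<open>j < g\<close>] \<open>{vs ! j, v} \<in> E\<close> by simp
    then have "j = Suc j' mod g"
      using \<open>v \<noteq> vs ! (Suc j mod g)\<close> j'(2) by blast
    then have "j' = (j + g - 1) mod g"
      using \<open>j' < g\<close> by (cases "Suc j' = g") auto
    then show "v = vs ! ((j + g - 1) mod g)"
      using j' by simp
  qed
  then have "card {v \<in> set vs. v = vs ! j \<or> {vs ! j, v} \<in> E}
      \<le> card {vs ! j, vs ! (Suc j mod g), vs ! ((j + g - 1) mod g)}"
    by (rule card_mono[rotated]) simp
  also have "\<dots> \<le> 3"
    by (simp add: card_insert_if)
  finally show ?thesis .
qed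

lemma card_neighbourhood_off_shortest_cycle:
  assumes girth: "has_girth k E g" and C: "is_cycle k E vs" "length vs = g" and "5 \<le> g"
    and w: "w \<in> {1..k}" "w \<notin> set vs"
  shows "card {v \<in> set vs. {w, v} \<in> E} \<le> 1"
  unfolding One_nat_def
proof (subst card_le_Suc0_iff_eq, safe)
  fix v v' assume "v \<in> set vs" "{w, v} \<in> E" "v' \<in> set vs" "{w, v'} \<in> E"
  then obtain j j' where "j < g" "v = vs ! j" "j' < g" "v' = vs ! j'"
    using C(2) by (metis in_set_conv_nth)
  then show "v = v'"
    using shortest_cycle_outside_neighbour_unique[OF girth C \<open>5 \<le> g\<close> w]
      \<open>{w, v} \<in> E\<close> \<open>{w, v'} \<in> E\<close> by blast
qed simp

lemma card_nonnbrs_on_shortest_cycle: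
  assumes girth: "has_girth k E g" and C: "is_cycle k E vs" "length vs = g" and "5 \<le> g"
    and i: "i \<in> {1..k}"
  shows "g \<le> card (nonnbrs k E i \<inter> set vs) + (if i \<in> set vs then 3 else 1)"
proof -
  define B where "B = {v \<in> set vs. v = i \<or> {i, v} \<in> E}"
  have "set vs \<subseteq> {1..k}"
    using C(1) by (simp add: is_cycle_def)
  then have "set vs \<subseteq> (nonnbrs k E i \<inter> set vs) \<union> B"
    unfolding B_def nonnbrs_def by auto
  then have "card (set vs) \<le> card (nonnbrs k E i \<inter> set vs \<union> B)"
    by (rule card_mono[rotated]) (simp add: B_def)
  also have "\<dots> \<le> card (nonnbrs k E i \<inter> set vs) + card B"
    by (rule card_Un_le)
  finally have "card (set vs) \<le> card (nonnbrs k E i \<inter> set vs) + card B" .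
  moreover have "card (set vs) = g"
    using C by (simp add: is_cycle_def distinct_card)
  moreover have "card B \<le> (if i \<in> set vs then 3 else 1)"
  proof (cases "i \<in> set vs")
    case True
    then obtain j where "j < g" "i = vs ! j"
      using C(2) by (metis in_set_conv_nth)
    then show ?thesis
      using card_closed_neighbourhood_on_shortest_cycle[OF girth C] True by (simp add: B_def)
  next
    case False
    then have "B = {v \<in> set vs. {i, v} \<in> E}"
      unfolding B_def by auto
    then show ?thesis
      using card_neighbourhood_off_shortest_cycle[OF girth C \<open>5 \<le> g\<close> i False] False by simp
  qed
  ultimately show ?thesis
    by linarith
qed

lemma zeta_le:
  assumes "\<forall>i\<in>{1..k}. x i \<ge> 0 \<and> real (lam i) * x i + (\<Sum>j\<in>nonnbrs k E i. x j) \<ge> 1"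
  shows "zeta k E lam \<le> (\<Sum>i\<in>{1..k}. real (lam i) * x i)"
  unfolding zeta_def
proof (rule cInf_lower)
  show "(\<Sum>i\<in>{1..k}. real (lam i) * x i) \<in> {\<Sum>i\<in>{1..k}. real (lam i) * x i |x.
      \<forall>i\<in>{1..k}. 0 \<le> x i \<and> 1 \<le> real (lam i) * x i + (\<Sum>j\<in>nonnbrs k E i. x j)}"
    using assms by blast
  show "bdd_below {\<Sum>i\<in>{1..k}. real (lam i) * x i |x.
      \<forall>i\<in>{1..k}. 0 \<le> x i \<and> 1 \<le> real (lam i) * x i + (\<Sum>j\<in>nonnbrs k E i. x j)}"
    by (rule bdd_belowI[of _ 0]) (auto intro: sum_nonneg)
qed

lemma zeta_le_shortest_cycle:
  assumes girth: "has_girth k E g" and C: "is_cycle k E vs" "length vs = g" and "5 \<le> g"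
    and lam: "\<forall>i\<in>{1..k}. 2 \<le> lam i"
  shows "zeta k E lam \<le> (\<Sum>i\<in>set vs. real (lam i)) / real (g - 1)"
proof -
  define x where "x i = (if i \<in> set vs then 1 / real (g - 1) else 0)" for i
  have "real (g - 1) > 0"
    using \<open>5 \<le> g\<close> by simp
  have "x i \<ge> 0 \<and> real (lam i) * x i + (\<Sum>j\<in>nonnbrs k E i. x j) \<ge> 1" if i: "i \<in> {1..k}" for i
  proof
    show "x i \<ge> 0"
      by (simp add: x_def)
    let ?c = "card (nonnbrs k E i \<inter> set vs)"
    let ?own = "if i \<in> set vs then lam i else 0"
    have "(\<Sum>j\<in>nonnbrs k E i. x j) = (\<Sum>j\<in>nonnbrs k E i \<inter> set vs. 1 / real (g - 1))"
      unfolding x_def by (rule sum.inter_restrict[symmetric]) (simp add: nonnbrs_def)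
    then have "real (lam i) * x i + (\<Sum>j\<in>nonnbrs k E i. x j) = real (?own + ?c) / real (g - 1)"
      by (simp add: x_def add_divide_distrib)
    moreover have "g - 1 \<le> ?own + ?c"
      using card_nonnbrs_on_shortest_cycle[OF girth C \<open>5 \<le> g\<close> i] lam i
      by (cases "i \<in> set vs") fastforce+
    then have "real (g - 1) \<le> real (?own + ?c)"
      by (simp only: of_nat_le_iff)
    ultimately show "real (lam i) * x i + (\<Sum>j\<in>nonnbrs k E i. x j) \<ge> 1"
      using \<open>real (g - 1) > 0\<close> by (simp add: le_divide_eq)
  qed
  then have "zeta k E lam \<le> (\<Sum>i\<in>{1..k}. real (lam i) * x i)"
    by (intro zeta_le) blast
  also have "\<dots> = (\<Sum>i\<in>set vs. real (lam i) * x i)"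
    using C(1) by (intro sum.mono_neutral_right) (auto simp: is_cycle_def x_def)
  also have "\<dots> = (\<Sum>i\<in>set vs. real (lam i)) / real (g - 1)"
    by (simp add: x_def sum_divide_distrib)
  finally show ?thesis .
qed

lemma zeta_le_girth:
  assumes R: "realisable_with_profile TYPE('a::euclidean_space) k E lam"
    and lam: "\<forall>i\<in>{1..k}. 2 \<le> lam i" and girth: "has_girth k E g" and "5 \<le> g"
  shows "zeta k E lam \<le> real (g div 2 * DIM('a)) / real (g - 1)"
proof -
  obtain P :: "nat \<Rightarrow> 'a set"
    where P: "\<forall>i\<in>{1..k}. finite (P i) \<and> profile_val (P i) = lam i" and comp: "compatible E P"
    using R unfolding realisable_with_profile_def by blast
  obtain vs where C: "is_cycle k E vs" "length vs = g"
    using girth unfolding has_girth_def by blast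
  have on_cycle: "vs ! j \<in> {1..k}" if "j < g" for j
  proof -
    have "vs ! j \<in> set vs"
      using that C(2) by simp
    then show ?thesis
      using C(1) unfolding is_cycle_def by blast
  qed
  have "(\<Sum>i\<in>set vs. lam i) = (\<Sum>j<g. lam (vs ! j))"
  proof -
    have "set vs = (\<lambda>j. vs ! j) ` {..<g}"
      using C(2) by (auto simp: set_conv_nth)
    moreover have "inj_on (\<lambda>j. vs ! j) {..<g}"
      using C inj_on_nth[of vs "{..<g}"] by (simp add: is_cycle_def)
    ultimately show ?thesis
      by (simp add: sum.reindex)
  qed
  also have "\<dots> = (\<Sum>j<g. profile_val (P (vs ! j)))"
    using P on_cycle by simp
  also have "\<dots> \<le> g div 2 * DIM('a)"
  proof (rule sum_profile_val_le_if_unit_distance_cycle)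
    show "P (vs ! j) \<noteq> {}" if "j < g" for j
      using P lam on_cycle[OF that] by (fastforce simp: profile_val_def)
    show "dist p q = 1" if "j < g" "p \<in> P (vs ! j)" "q \<in> P (vs ! (Suc j mod g))" for j p q
      using comp is_cycle_edge[OF C(1), of j] that C(2) unfolding compatible_def by simp
  qed
  finally have "(\<Sum>i\<in>set vs. real (lam i)) \<le> real (g div 2 * DIM('a))"
    by (metis of_nat_le_iff of_nat_sum)
  then have "(\<Sum>i\<in>set vs. real (lam i)) / real (g - 1) \<le> real (g div 2 * DIM('a)) / real (g - 1)"
    by (simp add: divide_right_mono)
  with zeta_le_shortest_cycle[OF girth C \<open>5 \<le> g\<close> lam] show ?thesis
    by (rule order_trans)
qed

theorem theorem11p3:
  fixes k :: nat and E :: "nat set set" and lam :: "nat \<Rightarrow> nat"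
  assumes "simple_graph k E"
    and "realisable_with_profile TYPE('a::euclidean_space) k E lam"
    and "\<forall>i \<in> {1..k}. lam i \<ge> 2"
  shows "(\<forall>l::nat. l > 1 \<longrightarrow> has_girth k E (2 * l + 1) \<longrightarrow>
            zeta k E lam \<le> real DIM('a) / 2) \<and>
         (\<forall>l::nat. l > 2 \<longrightarrow> has_girth k E (2 * l) \<longrightarrow>
            zeta k E lam \<le> real l / (2 * real l - 1) * real DIM('a))"
proof (intro conjI allI impI)
  fix l :: nat assume l: "l > 1" and girth: "has_girth k E (2 * l + 1)"
  have "5 \<le> 2 * l + 1"
    using l by simp
  from zeta_le_girth[OF assms(2,3) girth this]
  have b: "zeta k E lam \<le> real ((2 * l + 1) div 2 * DIM('a)) / real (2 * l + 1 - 1)" .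
  have e: "real ((2 * l + 1) div 2 * DIM('a)) / real (2 * l + 1 - 1) = real DIM('a) / 2"
    using l by simp
  show "zeta k E lam \<le> real DIM('a) / 2"
    using b unfolding e .
next
  fix l :: nat assume l: "l > 2" and girth: "has_girth k E (2 * l)"
  have "5 \<le> 2 * l"
    using l by simp
  from zeta_le_girth[OF assms(2,3) girth this]
  have b: "zeta k E lam \<le> real (2 * l div 2 * DIM('a)) / real (2 * l - 1)" .
  have e: "real (2 * l div 2 * DIM('a)) / real (2 * l - 1) = real l / (2 * real l - 1) * real DIM('a)"
    using l by simp
  show "zeta k E lam \<le> real l / (2 * real l - 1) * real DIM('a)"
    using b unfolding e .
qed

end
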